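(* Let $\lambda, N, t, m, s, v$ be positive integers. (1) If $t\ge 2$, $t\le m(t-1)$, and there exists an $OCA_{\lambda}(N;t,m,t-1,v)$, then there exists an $OCA_{\lambda}(N;t,m,t,v)$. (2) If $s\ge 2$, $2\le t\le m(s-1)$, and there exists an $OCA_{\lambda}(N;t,m,s,v)$, then there exists an $OCA_{\lambda}(N;t,m,s-1,v)$. (3) If $m\ge 2$, $2\le t\le (m-1)s$, and there exists an $OCA_{\lambda}(N;t,m,s,v)$, then there exists an $OCA_{\lambda}(N;t,m-1,s,v)$.
   Context: For positive integers $m,s$, the RT poset $[m\times s]$ is the set $\{1,\ldots,ms\}$ partitioned into $m$ blocks $B_i=\{is+1,\ldots,(i+1)s\}$ ($i=0,\ldots,m-1$); each block is a chain under the usual order of the integers, and elements of different blocks are incomparable. An ideal is a subset $I$ such that $b\in I$ and $a\preceq b$ imply $a\in I$; an anti-ideal is the complement of an ideal. Given an $N\times n$ array $A$ over an alphabet $V$ of size $v$, a set of $t$ columns is $\lambda$-covered if in the $N\times t$ subarray formed by those columns every $t$-tuple over $V$ appears as a row at least $\lambda$ times. For positive integers with $2\le t\le ms$, an ordered covering array $OCA_{\lambda}(N;t,m,s,v)$ is an $N\times ms$ array over an alphabet of size $v$ whose columns are labeled by the elements of the RT poset $[m\times s]$, such that for every anti-ideal $J$ of size $t$ the set of columns labeled by $J$ is $\lambda$-covered. *)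

theory Defs
  imports Main "HOL-Library.FuncSet"
begin

text \<open>RT poset [m x s] on {1..m*s}: element x lies in block (x-1) div s; a precedes b
  iff they lie in the same block and a \<le> b.\<close>

definition rt_le :: "nat \<Rightarrow> nat \<Rightarrow> nat \<Rightarrow> bool" where
  "rt_le s a b \<longleftrightarrow> (a - 1) div s = (b - 1) div s \<and> a \<le> b"

definition rt_ideal :: "nat \<Rightarrow> nat \<Rightarrow> nat set \<Rightarrow> bool" where
  "rt_ideal m s I \<longleftrightarrow> I \<subseteq> {1..m*s} \<and>
     (\<forall>a\<in>{1..m*s}. \<forall>b\<in>I. rt_le s a b \<longrightarrow> a \<in> I)"

definition rt_anti_ideal :: "nat \<Rightarrow> nat \<Rightarrow> nat set \<Rightarrow> bool" where
  "rt_anti_ideal m s J \<longleftrightarrow> (\<exists>I. rt_ideal m s I \<and> J = {1..m*s} - I)"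

text \<open>An N x n array over alphabet V = {0..<v} is a list of N rows; each row is a function
  from column labels to symbols (only its values on the column labels matter).\<close>

definition lam_covered :: "nat \<Rightarrow> nat \<Rightarrow> (nat \<Rightarrow> nat) list \<Rightarrow> nat set \<Rightarrow> bool" where
  "lam_covered lam v A J \<longleftrightarrow>
     (\<forall>u \<in> J \<rightarrow>\<^sub>E {0..<v}. lam \<le> length (filter (\<lambda>r. \<forall>j\<in>J. r j = u j) A))"

definition is_OCA :: "nat \<Rightarrow> nat \<Rightarrow> nat \<Rightarrow> nat \<Rightarrow> nat \<Rightarrow> nat \<Rightarrow> (nat \<Rightarrow> nat) list \<Rightarrow> bool" where
  "is_OCA lam N t m s v A \<longleftrightarrow>
     2 \<le> t \<and> t \<le> m * s \<and> length A = N \<and>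
     (\<forall>r\<in>set A. \<forall>c\<in>{1..m*s}. r c < v) \<and>
     (\<forall>J. rt_anti_ideal m s J \<and> card J = t \<longrightarrow> lam_covered lam v A J)"

definition OCA_exists :: "nat \<Rightarrow> nat \<Rightarrow> nat \<Rightarrow> nat \<Rightarrow> nat \<Rightarrow> nat \<Rightarrow> bool" where
  "OCA_exists lam N t m s v \<longleftrightarrow> (\<exists>A. is_OCA lam N t m s v A)"

end

theory Submission
  imports Defs
begin

(* Each construction relabels columns.  If f maps [m' x s'] into [m x s] and sends every
   t-element anti-ideal J injectively onto an anti-ideal, then composing every row with f turns
   an OCA for [m x s] into one for [m' x s'], since the coverage of J is that of f ` J.
   Dropping a block: f is the inclusion.  Shortening the blocks from s to s - 1: f lifts every
   block onto the top s - 1 elements of the longer block.  Lengthening the blocks from t - 1 to t: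
   a t-element anti-ideal of [m x t] either avoids all bottom elements, and then is a lifted
   anti-ideal that f lowers back, or it is a whole block i.  So f sends the bottom of block i to
   the top of block i + 1 (mod m): a whole block lands on block i of [m x (t - 1)] plus the top
   of another block, again an anti-ideal with t elements. *)

lemma lam_covered_relabel:
  assumes inj: "inj_on f J" and cov: "lam_covered lam v A (f ` J)"
  shows "lam_covered lam v (map (\<lambda>r. r \<circ> f) A) J"
  unfolding lam_covered_def
proof
  fix u assume u: "u \<in> J \<rightarrow>\<^sub>E {0..<v}"
  define w where "w = restrict (\<lambda>y. u (the_inv_into J f y)) (f ` J)"
  have w_f: "w (f j) = u j" if "j \<in> J" for j
    using inj that by (simp add: w_def the_inv_into_f_f)
  have "w \<in> f ` J \<rightarrow>\<^sub>E {0..<v}"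
    using u w_f unfolding w_def by (auto simp: PiE_iff)
  then have "lam \<le> length (filter (\<lambda>r. \<forall>y\<in>f ` J. r y = w y) A)"
    using cov unfolding lam_covered_def by blast
  also have "filter (\<lambda>r. \<forall>y\<in>f ` J. r y = w y) A
           = filter ((\<lambda>r. \<forall>j\<in>J. r j = u j) \<circ> (\<lambda>r. r \<circ> f)) A"
    by (rule filter_cong) (auto simp: w_f)
  finally show "lam \<le> length (filter (\<lambda>r. \<forall>j\<in>J. r j = u j) (map (\<lambda>r. r \<circ> f) A))"
    by (simp add: filter_map)
qed

lemma is_OCA_relabel:
  assumes oca: "is_OCA lam N t m s v A" and t: "t \<le> m' * s'"
    and maps_to: "f ` {1..m'*s'} \<subseteq> {1..m*s}"
    and anti: "\<And>J. rt_anti_ideal m' s' J \<Longrightarrow> card J = t \<Longrightarrow>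
                    inj_on f J \<and> rt_anti_ideal m s (f ` J)"
  shows "is_OCA lam N t m' s' v (map (\<lambda>r. r \<circ> f) A)"
  unfolding is_OCA_def
proof (intro conjI allI impI)
  fix J assume J: "rt_anti_ideal m' s' J \<and> card J = t"
  then have inj: "inj_on f J" and "rt_anti_ideal m s (f ` J)" "card (f ` J) = t"
    using anti by (auto simp: card_image)
  then have "lam_covered lam v A (f ` J)"
    using oca unfolding is_OCA_def by blast
  then show "lam_covered lam v (map (\<lambda>r. r \<circ> f) A) J"
    by (rule lam_covered_relabel[OF inj])
qed (use oca t maps_to in \<open>auto simp: is_OCA_def\<close>)

(* the element at position k of block i, positions counted from 0 at the bottom *)
definition rt_elem :: "nat \<Rightarrow> nat \<Rightarrow> nat \<Rightarrow> nat" where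
  "rt_elem s i k = i * s + k + 1"

definition rt_block_of :: "nat \<Rightarrow> nat \<Rightarrow> nat" where
  "rt_block_of s x = (x - 1) div s"

definition rt_pos :: "nat \<Rightarrow> nat \<Rightarrow> nat" where
  "rt_pos s x = (x - 1) mod s"

lemma rt_block_of_rt_elem [simp]: "k < s \<Longrightarrow> rt_block_of s (rt_elem s i k) = i"
  and rt_pos_rt_elem [simp]: "k < s \<Longrightarrow> rt_pos s (rt_elem s i k) = k"
  by (simp_all add: rt_block_of_def rt_pos_def rt_elem_def)

lemma rt_elem_eq_iff:
  "k < s \<Longrightarrow> k' < s \<Longrightarrow> rt_elem s i k = rt_elem s i' k' \<longleftrightarrow> i = i' \<and> k = k'"
  by (metis rt_block_of_rt_elem rt_pos_rt_elem)

lemma rt_elem_in_range_iff: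
  assumes "k < s"
  shows "rt_elem s i k \<in> {1..m*s} \<longleftrightarrow> i < m"
proof
  assume "i < m"
  then have "Suc i * s \<le> m * s" by (intro mult_le_mono1) simp
  then show "rt_elem s i k \<in> {1..m*s}" using assms by (simp add: rt_elem_def)
next
  assume "rt_elem s i k \<in> {1..m*s}"
  then have "i * s < m * s" by (simp only: rt_elem_def atLeastAtMost_iff) linarith
  then show "i < m" by simp
qed

lemma rt_elem_in_range: "i < m \<Longrightarrow> k < s \<Longrightarrow> rt_elem s i k \<in> {1..m*s}"
  using rt_elem_in_range_iff by blast

lemma rt_elem_cases:
  assumes "x \<in> {1..m*s}"
  obtains i k where "i < m" "k < s" "x = rt_elem s i k"
proof
  have s: "0 < s" using assms by (cases s) auto
  show "x = rt_elem s (rt_block_of s x) (rt_pos s x)"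
    using assms by (simp add: rt_elem_def rt_block_of_def rt_pos_def)
  show "rt_pos s x < s" using s by (simp add: rt_pos_def)
  show "rt_block_of s x < m"
    using assms unfolding rt_block_of_def by (intro less_mult_imp_div_less) auto
qed

lemma rt_le_rt_elem:
  "k < s \<Longrightarrow> k' < s \<Longrightarrow> rt_le s (rt_elem s i k) (rt_elem s i' k') \<longleftrightarrow> i = i' \<and> k \<le> k'"
  by (auto simp: rt_le_def rt_elem_def simp flip: rt_block_of_def)

lemma rt_anti_ideal_iff_upward_closed:
  "rt_anti_ideal m s J \<longleftrightarrow> J \<subseteq> {1..m*s} \<and> (\<forall>a\<in>J. \<forall>b\<in>{1..m*s}. rt_le s a b \<longrightarrow> b \<in> J)"
proof
  assume "rt_anti_ideal m s J"
  then obtain I where "rt_ideal m s I" "J = {1..m*s} - I"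
    unfolding rt_anti_ideal_def by blast
  then show "J \<subseteq> {1..m*s} \<and> (\<forall>a\<in>J. \<forall>b\<in>{1..m*s}. rt_le s a b \<longrightarrow> b \<in> J)"
    unfolding rt_ideal_def by blast
next
  assume J: "J \<subseteq> {1..m*s} \<and> (\<forall>a\<in>J. \<forall>b\<in>{1..m*s}. rt_le s a b \<longrightarrow> b \<in> J)"
  then have "rt_ideal m s ({1..m*s} - J) \<and> J = {1..m*s} - ({1..m*s} - J)"
    unfolding rt_ideal_def by blast
  then show "rt_anti_ideal m s J"
    unfolding rt_anti_ideal_def by blast
qed

lemma rt_anti_ideal_iff:
  "rt_anti_ideal m s J \<longleftrightarrow> J \<subseteq> {1..m*s} \<and>
     (\<forall>i k k'. k \<le> k' \<longrightarrow> k' < s \<longrightarrow> rt_elem s i k \<in> J \<longrightarrow> rt_elem s i k' \<in> J)"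
  unfolding rt_anti_ideal_iff_upward_closed
proof (intro iffI conjI allI impI ballI; (elim conjE)?)
  fix i k k'
  assume J: "J \<subseteq> {1..m*s}" "\<forall>a\<in>J. \<forall>b\<in>{1..m*s}. rt_le s a b \<longrightarrow> b \<in> J"
    and k: "k \<le> k'" "k' < s" and a: "rt_elem s i k \<in> J"
  have "rt_elem s i k \<in> {1..m*s}" using a J(1) by blast
  then have "i < m" using k rt_elem_in_range_iff by simp
  then have "rt_elem s i k' \<in> {1..m*s}" using k by (intro rt_elem_in_range) auto
  moreover have "rt_le s (rt_elem s i k) (rt_elem s i k')" using k by (simp add: rt_le_rt_elem)
  ultimately show "rt_elem s i k' \<in> J" using J(2) a by blast
next
  fix a b
  assume J: "J \<subseteq> {1..m*s}"
    "\<forall>i k k'. k \<le> k' \<longrightarrow> k' < s \<longrightarrow> rt_elem s i k \<in> J \<longrightarrow> rt_elem s i k' \<in> J"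
    and "a \<in> J" "b \<in> {1..m*s}" "rt_le s a b"
  moreover obtain i k where "k < s" "a = rt_elem s i k"
    using \<open>a \<in> J\<close> J(1) by (blast elim: rt_elem_cases)
  moreover obtain i' k' where "k' < s" "b = rt_elem s i' k'"
    using \<open>b \<in> {1..m*s}\<close> by (blast elim: rt_elem_cases)
  ultimately show "b \<in> J" by (auto simp: rt_le_rt_elem)
qed auto

lemma rt_anti_ideal_mono_blocks:
  assumes "m' \<le> m" "rt_anti_ideal m' s J"
  shows "rt_anti_ideal m s J"
proof -
  have "{1..m'*s} \<subseteq> {1..m*s}" using mult_le_mono1[OF assms(1)] by auto
  then show ?thesis using assms(2) unfolding rt_anti_ideal_iff by blast
qed

definition rt_shift :: "nat \<Rightarrow> nat \<Rightarrow> nat" where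
  "rt_shift s x = rt_elem (Suc s) (rt_block_of s x) (Suc (rt_pos s x))"

lemma rt_shift_rt_elem: "k < s \<Longrightarrow> rt_shift s (rt_elem s i k) = rt_elem (Suc s) i (Suc k)"
  by (simp add: rt_shift_def)

lemma rt_shift_eq_rt_elemE:
  assumes "y \<in> {1..m*s}" "rt_shift s y = rt_elem (Suc s) i k" "k < Suc s"
  obtains k0 where "k = Suc k0" "k0 < s" "y = rt_elem s i k0"
proof -
  obtain i0 k0 where "k0 < s" "y = rt_elem s i0 k0"
    using assms(1) by (blast elim: rt_elem_cases)
  with assms(2,3) have "i0 = i" "k = Suc k0"
    by (simp_all add: rt_shift_rt_elem rt_elem_eq_iff)
  with \<open>k0 < s\<close> \<open>y = rt_elem s i0 k0\<close> show ?thesis using that by blast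
qed

lemma rt_shift_maps_to: "rt_shift s ` {1..m*s} \<subseteq> {1..m*Suc s}"
proof
  fix y assume "y \<in> rt_shift s ` {1..m*s}"
  then obtain i k where "i < m" "k < s" "y = rt_shift s (rt_elem s i k)"
    by (blast elim: rt_elem_cases)
  then show "y \<in> {1..m*Suc s}" by (simp only: rt_shift_rt_elem) (intro rt_elem_in_range; simp)
qed

lemma inj_on_rt_shift: "inj_on (rt_shift s) {1..m*s}"
proof
  fix x y assume y: "y \<in> {1..m*s}" and "x \<in> {1..m*s}" "rt_shift s x = rt_shift s y"
  moreover obtain i k where "k < s" "x = rt_elem s i k"
    using \<open>x \<in> {1..m*s}\<close> by (blast elim: rt_elem_cases)
  ultimately have "rt_shift s y = rt_elem (Suc s) i (Suc k)" "Suc k < Suc s"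
    by (simp_all add: rt_shift_rt_elem)
  then show "x = y"
    using y \<open>x = rt_elem s i k\<close> by (elim rt_shift_eq_rt_elemE) auto
qed

lemma rt_anti_ideal_rt_shift_iff:
  assumes K: "K \<subseteq> {1..m*s}"
  shows "rt_anti_ideal m (Suc s) (rt_shift s ` K) \<longleftrightarrow> rt_anti_ideal m s K"
proof
  assume "rt_anti_ideal m (Suc s) (rt_shift s ` K)"
  then have closed: "rt_elem (Suc s) i k' \<in> rt_shift s ` K"
    if "k \<le> k'" "k' < Suc s" "rt_elem (Suc s) i k \<in> rt_shift s ` K" for i k k'
    using that unfolding rt_anti_ideal_iff by blast
  show "rt_anti_ideal m s K" unfolding rt_anti_ideal_iff
  proof (intro conjI allI impI)
    fix i k k' assume k: "k \<le> k'" "k' < s" and "rt_elem s i k \<in> K"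
    then have "rt_elem (Suc s) i (Suc k) \<in> rt_shift s ` K"
      by (metis image_eqI le_less_trans rt_shift_rt_elem)
    then have "rt_elem (Suc s) i (Suc k') \<in> rt_shift s ` K"
      using closed[of "Suc k" "Suc k'" i] k by simp
    then obtain y where y: "y \<in> K" "rt_shift s y = rt_elem (Suc s) i (Suc k')" by auto
    have "y \<in> {1..m*s}" using y K by blast
    then obtain k0 where "Suc k' = Suc k0" "y = rt_elem s i k0"
      using k by (elim rt_shift_eq_rt_elemE[OF _ y(2)]) simp
    then show "rt_elem s i k' \<in> K" using y by simp
  qed (fact K)
next
  assume "rt_anti_ideal m s K"
  then have closed: "rt_elem s i k' \<in> K" if "k \<le> k'" "k' < s" "rt_elem s i k \<in> K" for i k k'
    using that unfolding rt_anti_ideal_iff by blast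
  show "rt_anti_ideal m (Suc s) (rt_shift s ` K)" unfolding rt_anti_ideal_iff
  proof (intro conjI allI impI)
    show "rt_shift s ` K \<subseteq> {1..m*Suc s}" using K rt_shift_maps_to by blast
    fix i k k' assume k: "k \<le> k'" "k' < Suc s" and "rt_elem (Suc s) i k \<in> rt_shift s ` K"
    then obtain y where y: "y \<in> K" "rt_shift s y = rt_elem (Suc s) i k" by auto
    have "y \<in> {1..m*s}" using y K by blast
    then obtain k0 where "k = Suc k0" "y = rt_elem s i k0"
      using k by (elim rt_shift_eq_rt_elemE[OF _ y(2)]) simp
    with y have k0: "k = Suc k0" "rt_elem s i k0 \<in> K" by simp_all
    then obtain k0' where k0': "k' = Suc k0'" "k0 \<le> k0'" "k0' < s"
      using k by (cases k') auto
    then have "rt_elem s i k0' \<in> K" using closed k0 by blast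
    then show "rt_elem (Suc s) i k' \<in> rt_shift s ` K"
      using k0' by (metis image_eqI rt_shift_rt_elem)
  qed
qed

definition rt_unshift :: "nat \<Rightarrow> nat \<Rightarrow> nat \<Rightarrow> nat" where
  "rt_unshift m s x =
     (if rt_pos (Suc s) x = 0 then rt_elem s (Suc (rt_block_of (Suc s) x) mod m) (s - 1)
      else rt_elem s (rt_block_of (Suc s) x) (rt_pos (Suc s) x - 1))"

lemma rt_unshift_bottom: "rt_unshift m s (rt_elem (Suc s) i 0) = rt_elem s (Suc i mod m) (s - 1)"
  by (simp add: rt_unshift_def)

lemma rt_unshift_rt_elem_Suc: "k < s \<Longrightarrow> rt_unshift m s (rt_elem (Suc s) i (Suc k)) = rt_elem s i k"
  by (simp add: rt_unshift_def)

lemma rt_unshift_maps_to: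
  assumes "0 < s"
  shows "rt_unshift m s ` {1..m*Suc s} \<subseteq> {1..m*s}"
proof
  fix y assume "y \<in> rt_unshift m s ` {1..m*Suc s}"
  then obtain i k where i: "i < m" and k: "k < Suc s"
    and y: "y = rt_unshift m s (rt_elem (Suc s) i k)"
    by (blast elim: rt_elem_cases)
  show "y \<in> {1..m*s}"
  proof (cases k)
    case 0
    have "Suc i mod m < m" using i by simp
    then show ?thesis using y 0 assms by (simp only: rt_unshift_bottom) (intro rt_elem_in_range; simp)
  next
    case (Suc k0)
    then show ?thesis using y i k by (simp only: rt_unshift_rt_elem_Suc) (intro rt_elem_in_range; simp)
  qed
qed

lemma rt_shift_rt_unshift:
  assumes "x \<in> {1..m*Suc s}" "\<forall>i. x \<noteq> rt_elem (Suc s) i 0"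
  shows "rt_unshift m s x \<in> {1..m*s}" and "rt_shift s (rt_unshift m s x) = x"
proof -
  obtain i k where "i < m" "k < Suc s" "x = rt_elem (Suc s) i k"
    using assms(1) by (blast elim: rt_elem_cases)
  moreover with assms(2) obtain k0 where "k = Suc k0" by (cases k) auto
  ultimately have i: "i < m" and k0: "k0 < s" and x: "x = rt_elem (Suc s) i (Suc k0)"
    by simp_all
  show "rt_unshift m s x \<in> {1..m*s}"
    unfolding x rt_unshift_rt_elem_Suc[OF k0] using i k0 by (rule rt_elem_in_range)
  show "rt_shift s (rt_unshift m s x) = x"
    unfolding x rt_unshift_rt_elem_Suc[OF k0] rt_shift_rt_elem[OF k0] ..
qed

lemma card_rt_block: "card (rt_elem s i ` {..<s}) = s"
proof -
  have "inj_on (rt_elem s i) {..<s}" by (rule inj_onI) (simp add: rt_elem_eq_iff)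
  then show ?thesis by (simp add: card_image)
qed

lemma rt_anti_ideal_block_subset:
  "rt_anti_ideal m s J \<Longrightarrow> rt_elem s i 0 \<in> J \<Longrightarrow> rt_elem s i ` {..<s} \<subseteq> J"
  unfolding rt_anti_ideal_iff by blast

lemma rt_anti_ideal_block_insert_top:
  assumes "0 < s" "i < m" "j < m"
  shows "rt_anti_ideal m s (insert (rt_elem s j (s - 1)) (rt_elem s i ` {..<s}))"
  unfolding rt_anti_ideal_iff
proof (intro conjI allI impI)
  have "rt_elem s j (s - 1) \<in> {1..m*s}" using assms by (intro rt_elem_in_range) auto
  moreover have "rt_elem s i k \<in> {1..m*s}" if "k < s" for k using assms(2) that by (rule rt_elem_in_range)
  ultimately show "insert (rt_elem s j (s - 1)) (rt_elem s i ` {..<s}) \<subseteq> {1..m*s}"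
    by blast
  fix i' k k' assume k: "k \<le> k'" "k' < s"
    and "rt_elem s i' k \<in> insert (rt_elem s j (s - 1)) (rt_elem s i ` {..<s})"
  then consider "rt_elem s i' k = rt_elem s j (s - 1)"
    | k0 where "k0 < s" "rt_elem s i' k = rt_elem s i k0"
    by blast
  then show "rt_elem s i' k' \<in> insert (rt_elem s j (s - 1)) (rt_elem s i ` {..<s})"
  proof cases
    case 1
    then have "i' = j" "k' = s - 1" using k assms(1) by (simp_all add: rt_elem_eq_iff)
    then show ?thesis by simp
  next
    case 2
    then have "i' = i" using k by (simp add: rt_elem_eq_iff)
    then show ?thesis using k by simp
  qed
qed

lemma rt_unshift_block:
  "rt_unshift m s ` rt_elem (Suc s) i ` {..<Suc s}
     = insert (rt_elem s (Suc i mod m) (s - 1)) (rt_elem s i ` {..<s})"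
proof -
  have "rt_elem (Suc s) i ` {..<Suc s}
      = insert (rt_elem (Suc s) i 0) ((\<lambda>k. rt_elem (Suc s) i (Suc k)) ` {..<s})"
    by (simp add: lessThan_Suc_eq_insert_0 image_image)
  moreover have "(\<lambda>k. rt_unshift m s (rt_elem (Suc s) i (Suc k))) ` {..<s} = rt_elem s i ` {..<s}"
    by (rule image_cong) (simp_all add: rt_unshift_rt_elem_Suc)
  ultimately show ?thesis by (simp add: image_image rt_unshift_bottom)
qed

lemma rt_unshift_on_block:
  assumes "0 < s" "2 \<le> m" "i < m"
  shows "inj_on (rt_unshift m s) (rt_elem (Suc s) i ` {..<Suc s})"
    and "rt_anti_ideal m s (rt_unshift m s ` rt_elem (Suc s) i ` {..<Suc s})"
proof -
  have next_ne: "Suc i mod m \<noteq> i"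
  proof (cases "Suc i < m")
    case False
    then have "Suc i = m" using assms(3) by simp
    then show ?thesis using assms(2) by auto
  qed simp
  then have "rt_elem s (Suc i mod m) (s - 1) \<notin> rt_elem s i ` {..<s}"
    using assms(1) by (auto simp: rt_elem_eq_iff)
  then have "card (rt_unshift m s ` rt_elem (Suc s) i ` {..<Suc s})
      = card (rt_elem (Suc s) i ` {..<Suc s})"
    by (simp add: rt_unshift_block card_rt_block)
  then show "inj_on (rt_unshift m s) (rt_elem (Suc s) i ` {..<Suc s})"
    by (simp add: inj_on_iff_eq_card)
  have "Suc i mod m < m" using assms(3) by simp
  then show "rt_anti_ideal m s (rt_unshift m s ` rt_elem (Suc s) i ` {..<Suc s})"
    unfolding rt_unshift_block using assms by (intro rt_anti_ideal_block_insert_top)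
qed

lemma rt_unshift_anti_ideal:
  assumes s: "0 < s" and m: "2 \<le> m" and J: "rt_anti_ideal m (Suc s) J" "card J = Suc s"
  shows "inj_on (rt_unshift m s) J \<and> rt_anti_ideal m s (rt_unshift m s ` J)"
proof -
  have J_range: "J \<subseteq> {1..m*Suc s}" using J(1) unfolding rt_anti_ideal_iff by blast
  show ?thesis
  proof (cases "\<exists>i. rt_elem (Suc s) i 0 \<in> J")
    case True
    then obtain i where i: "rt_elem (Suc s) i 0 \<in> J" by blast
    then have "i < m" using J_range rt_elem_in_range_iff[of 0 "Suc s" i m] by blast
    have "rt_elem (Suc s) i ` {..<Suc s} = J"
      using card_subset_eq[OF finite_subset[OF J_range] rt_anti_ideal_block_subset[OF J(1) i]]
      by (simp add: card_rt_block J(2))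
    then show ?thesis using rt_unshift_on_block[OF s m \<open>i < m\<close>] by simp
  next
    case False
    have unshift_in_range: "rt_unshift m s x \<in> {1..m*s}"
      and shift_unshift: "rt_shift s (rt_unshift m s x) = x" if "x \<in> J" for x
      using that False J_range rt_shift_rt_unshift by blast+
    have "inj_on (rt_unshift m s) J" using shift_unshift by (rule inj_on_inverseI)
    moreover have "rt_shift s ` rt_unshift m s ` J = J"
      by (simp add: image_image shift_unshift cong: image_cong)
    moreover have "rt_unshift m s ` J \<subseteq> {1..m*s}" using unshift_in_range by blast
    ultimately show ?thesis using J(1) rt_anti_ideal_rt_shift_iff by metis
  qed
qed

lemma is_OCA_fewer_blocks:
  assumes oca: "is_OCA lam N t m s v A" and "m' \<le> m" "t \<le> m' * s"
  shows "is_OCA lam N t m' s v A"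
proof -
  have "id ` {1..m'*s} \<subseteq> {1..m*s}" using mult_le_mono1[OF \<open>m' \<le> m\<close>] by auto
  then have "is_OCA lam N t m' s v (map (\<lambda>r. r \<circ> id) A)"
    using \<open>m' \<le> m\<close> by (intro is_OCA_relabel[OF oca \<open>t \<le> m' * s\<close>])
      (auto intro: rt_anti_ideal_mono_blocks)
  then show ?thesis by simp
qed

lemma is_OCA_shorter_blocks:
  assumes oca: "is_OCA lam N t m (Suc s) v A" and "t \<le> m * s"
  shows "is_OCA lam N t m s v (map (\<lambda>r. r \<circ> rt_shift s) A)"
proof (rule is_OCA_relabel[OF oca \<open>t \<le> m * s\<close> rt_shift_maps_to])
  fix J assume "rt_anti_ideal m s J"
  then have "J \<subseteq> {1..m*s}" unfolding rt_anti_ideal_iff by blast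
  then show "inj_on (rt_shift s) J \<and> rt_anti_ideal m (Suc s) (rt_shift s ` J)"
    using \<open>rt_anti_ideal m s J\<close> inj_on_subset[OF inj_on_rt_shift]
    by (simp add: rt_anti_ideal_rt_shift_iff)
qed

lemma is_OCA_longer_blocks:
  assumes oca: "is_OCA lam N (Suc s) m s v A" and "0 < s" "2 \<le> m"
  shows "is_OCA lam N (Suc s) m (Suc s) v (map (\<lambda>r. r \<circ> rt_unshift m s) A)"
proof (rule is_OCA_relabel[OF oca _ rt_unshift_maps_to[OF \<open>0 < s\<close>]])
  show "Suc s \<le> m * Suc s" using \<open>2 \<le> m\<close> mult_le_mono1[of 1 m "Suc s"] by simp
qed (use assms(2,3) rt_unshift_anti_ideal in blast)

theorem proposition2:
  fixes lam N t m s v :: nat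
  assumes pos: "0 < lam" "0 < N" "0 < t" "0 < m" "0 < s" "0 < v"
  shows "(2 \<le> t \<and> t \<le> m * (t - 1) \<and> OCA_exists lam N t m (t - 1) v
            \<longrightarrow> OCA_exists lam N t m t v)
       \<and> (2 \<le> s \<and> 2 \<le> t \<and> t \<le> m * (s - 1) \<and> OCA_exists lam N t m s v
            \<longrightarrow> OCA_exists lam N t m (s - 1) v)
       \<and> (2 \<le> m \<and> 2 \<le> t \<and> t \<le> (m - 1) * s \<and> OCA_exists lam N t m s v
            \<longrightarrow> OCA_exists lam N t (m - 1) s v)"
proof (intro conjI impI)
  assume h: "2 \<le> t \<and> t \<le> m * (t - 1) \<and> OCA_exists lam N t m (t - 1) v"
  then have t: "t = Suc (t - 1)" "0 < t - 1" by auto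
  have "2 \<le> m"
  proof (rule ccontr)
    assume "\<not> 2 \<le> m"
    then have "m * (t - 1) \<le> t - 1" using pos(4) by simp
    then show False using h t by linarith
  qed
  then show "OCA_exists lam N t m t v"
    using h t is_OCA_longer_blocks[of lam N "t - 1" m v] unfolding OCA_exists_def by metis
next
  assume "2 \<le> s \<and> 2 \<le> t \<and> t \<le> m * (s - 1) \<and> OCA_exists lam N t m s v"
  moreover have "s = Suc (s - 1)" using pos(5) by simp
  ultimately show "OCA_exists lam N t m (s - 1) v"
    using is_OCA_shorter_blocks[of lam N t m "s - 1" v] unfolding OCA_exists_def by metis
next
  assume "2 \<le> m \<and> 2 \<le> t \<and> t \<le> (m - 1) * s \<and> OCA_exists lam N t m s v"
  then show "OCA_exists lam N t (m - 1) s v"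
    using is_OCA_fewer_blocks[of lam N t m s v _ "m - 1"] unfolding OCA_exists_def by auto
qed

end
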